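(* Let $m\ge1$ and $n_1,\dots,n_m\ge2$ be integers, $\mathcal D=\mathcal D_1\times\cdots\times\mathcal D_m$ the full factorial design where $\mathcal D_j$ is the set of $n_j$-th roots of unity, ordered lexicographically, and $L=\mathbb Z_{n_1}\times\cdots\times\mathbb Z_{n_m}$. Let $\mathcal F$ be a nonempty fraction (multiset of points of $\mathcal D$) with counting function $R=\sum_{\alpha\in L}c_\alpha X^\alpha$, where $X^\alpha(\zeta)=\zeta_1^{\alpha_1}\cdots\zeta_m^{\alpha_m}$, and let $\#\mathcal F=\sum_{\zeta\in\mathcal D}R(\zeta)$. Define the generalized wordlength pattern $(\alpha_1(\mathcal F),\dots,\alpha_m(\mathcal F))$ by \[ \alpha_i(\mathcal F)=\sum_{\alpha\in L,\ \|\alpha\|_0=i}\left(\frac{\|c_\alpha\|_2}{\|c_0\|_2}\right)^2,\quad i=1,\dots,m, \] where $\|\alpha\|_0$ is the number of nonzero components of $\alpha$ and $\|\cdot\|_2$ is the complex modulus. Let $Y=[R(\zeta):\zeta\in\mathcal D]$, and for $\alpha\in L$ let $H^\alpha_R$ be the real part (entrywise) of $\overline{X^\alpha}(X^\alpha)^T$, where $X^\alpha$ is the column vector $[X^\alpha(\zeta):\zeta\in\mathcal D]$. Then \[ \alpha_i(\mathcal F)=\frac{1}{(\#\mathcal F)^2}\,Y^T H_i Y,\qquad i=1,\dots,m, \] where $H_i=\sum_{\alpha\in L,\ \|\alpha\|_0=i}H_R^\alpha$.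
   Context: The counting function $R$ gives, for each $\zeta\in\mathcal D$, the number of times $\zeta$ appears in $\mathcal F$; the monomials $X^\alpha$, $\alpha\in L$, form a basis of complex functions on $\mathcal D$, so the $c_\alpha$ are unique. $c_0$ denotes the coefficient for $\alpha=(0,\dots,0)$. *)

theory Defs
  imports "HOL-Analysis.Analysis" "HOL-Library.Multiset"
begin

definition design :: "nat \<Rightarrow> (nat \<Rightarrow> nat) \<Rightarrow> (nat \<Rightarrow> complex) set" where
  "design m n = PiE {..<m} (\<lambda>j. {z::complex. z ^ n j = 1})"

definition exps :: "nat \<Rightarrow> (nat \<Rightarrow> nat) \<Rightarrow> (nat \<Rightarrow> nat) set" where
  "exps m n = PiE {..<m} (\<lambda>j. {..<n j})"

definition zero_exp :: "nat \<Rightarrow> nat \<Rightarrow> nat" where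
  "zero_exp m = restrict (\<lambda>_. 0) {..<m}"

definition monomial :: "nat \<Rightarrow> (nat \<Rightarrow> nat) \<Rightarrow> (nat \<Rightarrow> complex) \<Rightarrow> complex" where
  "monomial m \<alpha> \<zeta> = (\<Prod>j<m. \<zeta> j ^ \<alpha> j)"

definition weight0 :: "nat \<Rightarrow> (nat \<Rightarrow> nat) \<Rightarrow> nat" where
  "weight0 m \<alpha> = card {j \<in> {..<m}. \<alpha> j \<noteq> 0}"

definition gwlp :: "nat \<Rightarrow> (nat \<Rightarrow> nat) \<Rightarrow> ((nat \<Rightarrow> nat) \<Rightarrow> complex) \<Rightarrow> nat \<Rightarrow> real" where
  "gwlp m n c i = (\<Sum>\<alpha>\<in>{\<alpha>\<in>exps m n. weight0 m \<alpha> = i}. (cmod (c \<alpha>) / cmod (c (zero_exp m)))^2)"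

definition HR :: "nat \<Rightarrow> (nat \<Rightarrow> nat) \<Rightarrow> (nat \<Rightarrow> complex) \<Rightarrow> (nat \<Rightarrow> complex) \<Rightarrow> real" where
  "HR m \<alpha> \<zeta> \<eta> = Re (cnj (monomial m \<alpha> \<zeta>) * monomial m \<alpha> \<eta>)"

definition Hmat :: "nat \<Rightarrow> (nat \<Rightarrow> nat) \<Rightarrow> nat \<Rightarrow> (nat \<Rightarrow> complex) \<Rightarrow> (nat \<Rightarrow> complex) \<Rightarrow> real" where
  "Hmat m n i \<zeta> \<eta> = (\<Sum>\<alpha>\<in>{\<alpha>\<in>exps m n. weight0 m \<alpha> = i}. HR m \<alpha> \<zeta> \<eta>)"

definition qform :: "(nat \<Rightarrow> complex) set \<Rightarrow> ((nat \<Rightarrow> complex) \<Rightarrow> (nat \<Rightarrow> complex) \<Rightarrow> real)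
    \<Rightarrow> ((nat \<Rightarrow> complex) \<Rightarrow> real) \<Rightarrow> real" where
  "qform D H Y = (\<Sum>\<zeta>\<in>D. \<Sum>\<eta>\<in>D. Y \<zeta> * H \<zeta> \<eta> * Y \<eta>)"

end

theory Submission
  imports Defs
begin

text \<open>The monomials are characters of the group \<open>D\<close>, hence orthogonal (with \<open>#D = \<Prod>\<^sub>j n\<^sub>j\<close>):
  \<open>\<Sum>\<zeta>\<in>D. conj (X\<^sup>\<alpha> \<zeta>) X\<^sup>\<beta> \<zeta> = #D \<delta>\<^sub>\<alpha>\<^sub>\<beta>\<close>. Consequently \<open>c\<^sub>\<alpha> = \<langle>X\<^sup>\<alpha>, R\<rangle> / #D\<close>,
  and in particular \<open>c\<^sub>0 = #F / #D\<close>. Since \<open>Y\<close> is real,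
  \<open>Y\<^sup>T H\<^sup>\<alpha>\<^sub>R Y = Re (conj \<langle>X\<^sup>\<alpha>, Y\<rangle> \<langle>X\<^sup>\<alpha>, Y\<rangle>) = |\<langle>X\<^sup>\<alpha>, Y\<rangle>|\<^sup>2 = (#D |c\<^sub>\<alpha>|)\<^sup>2\<close>,
  and dividing by \<open>(#D |c\<^sub>0|)\<^sup>2 = (#F)\<^sup>2\<close> and summing over \<open>\<parallel>\<alpha>\<parallel>\<^sub>0 = i\<close> gives the claim.\<close>

lemma cnj_mult_self_root_unity:
  assumes "z ^ n = (1::complex)" "n > 0"
  shows "cnj z * z = 1"
proof -
  have "norm z = 1" using power_eq_1_iff[OF assms(1)] assms(2) by simp
  then show ?thesis by (metis complex_norm_square mult.commute of_real_1 power_one)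
qed

lemma sum_roots_unity_power_eq_0:
  assumes "0 < k" "k < n"
  shows "(\<Sum>z\<in>{z::complex. z ^ n = 1}. z ^ k) = 0"
proof -
  have n: "n > 0" using assms by simp
  define f where "f = (\<lambda>l. cis (2 * pi * real l / real n))"
  define w where "w = f k"
  have bij: "bij_betw f {..<n} {z. z ^ n = 1}"
    unfolding f_def by (rule Complex.bij_betw_roots_unity[OF n])
  have "w \<noteq> 1"
  proof
    assume "w = 1"
    then have "f k = f 0" by (simp add: w_def f_def)
    then have "k = 0" using bij_betw_imp_inj_on[OF bij] assms by (auto dest: inj_onD)
    then show False using assms by simp
  qed
  have w_pow: "f l ^ k = w ^ l" for l
    unfolding f_def w_def Complex.DeMoivre by (simp add: mult_ac)
  have "(\<Sum>z\<in>{z::complex. z ^ n = 1}. z ^ k) = (\<Sum>l<n. f l ^ k)"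
    by (rule sum.reindex_bij_betw[OF bij, symmetric])
  also have "\<dots> = (w ^ n - 1) / (w - 1)"
    using \<open>w \<noteq> 1\<close> by (simp add: w_pow geometric_sum)
  also have "w ^ n = 1"
    using bij_betw_apply[OF bij, of k] assms by (simp add: w_def)
  finally show ?thesis by simp
qed

lemma sum_roots_unity_cnj_power_mult_power:
  assumes "a < n" "b < n"
  shows "(\<Sum>z\<in>{z::complex. z ^ n = 1}. cnj z ^ a * z ^ b) = (if a = b then of_nat n else 0)"
proof -
  let ?U = "{z::complex. z ^ n = 1}"
  have n: "n > 0" using assms by simp
  have unit: "cnj z * z = 1" if "z \<in> ?U" for z
    using that n by (simp add: cnj_mult_self_root_unity)
  consider "a = b" | "a < b" | "b < a" by linarith
  then show ?thesis
  proof cases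
    case 1
    have "(\<Sum>z\<in>?U. cnj z ^ a * z ^ b) = (\<Sum>z\<in>?U. (cnj z * z) ^ a)"
      using 1 by (simp add: power_mult_distrib)
    also have "\<dots> = of_nat (card ?U)" using unit by simp
    finally show ?thesis using 1 card_roots_unity_eq[OF n] by simp
  next
    case 2
    have "(\<Sum>z\<in>?U. cnj z ^ a * z ^ b) = (\<Sum>z\<in>?U. (cnj z * z) ^ a * z ^ (b - a))"
      using 2 by (intro sum.cong refl) (simp add: power_mult_distrib power_add[symmetric])
    also have "\<dots> = (\<Sum>z\<in>?U. z ^ (b - a))" using unit by simp
    finally show ?thesis using 2 assms sum_roots_unity_power_eq_0[of "b - a" n] by simp
  next
    case 3
    have "(\<Sum>z\<in>?U. cnj z ^ a * z ^ b) = (\<Sum>z\<in>?U. (cnj z * z) ^ b * cnj (z ^ (a - b)))"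
      using 3 by (intro sum.cong refl) (simp add: power_mult_distrib power_add[symmetric])
    also have "\<dots> = cnj (\<Sum>z\<in>?U. z ^ (a - b))" using unit by (simp add: cnj_sum)
    finally show ?thesis using 3 assms sum_roots_unity_power_eq_0[of "a - b" n] by simp
  qed
qed

lemma finite_exps: "finite (exps m n)"
  unfolding exps_def by (intro finite_PiE) auto

lemma sum_design_cnj_monomial_mult_monomial:
  assumes \<alpha>: "\<alpha> \<in> exps m n" and \<beta>: "\<beta> \<in> exps m n"
  shows "(\<Sum>\<zeta>\<in>design m n. cnj (monomial m \<alpha> \<zeta>) * monomial m \<beta> \<zeta>)
         = (if \<alpha> = \<beta> then of_nat (\<Prod>j<m. n j) else 0)"
proof -
  have exp_bound: "\<alpha> j < n j" "\<beta> j < n j" if "j < m" for j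
    using \<alpha> \<beta> that by (auto simp: exps_def PiE_iff)
  have n_pos: "n j > 0" if "j < m" for j
    using exp_bound(1)[OF that] by linarith
  have "(\<Sum>\<zeta>\<in>design m n. cnj (monomial m \<alpha> \<zeta>) * monomial m \<beta> \<zeta>)
      = (\<Sum>\<zeta>\<in>design m n. \<Prod>j<m. cnj (\<zeta> j) ^ \<alpha> j * \<zeta> j ^ \<beta> j)"
    by (simp add: monomial_def cnj_prod prod.distrib)
  also have "\<dots> = (\<Prod>j<m. \<Sum>z\<in>{z::complex. z ^ n j = 1}. cnj z ^ \<alpha> j * z ^ \<beta> j)"
    unfolding design_def using n_pos
    by (intro prod_sum_PiE[symmetric] finite_roots_unity) (auto simp: Suc_le_eq)
  also have "\<dots> = (\<Prod>j<m. if \<alpha> j = \<beta> j then of_nat (n j) else 0)"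
    using exp_bound by (intro prod.cong refl sum_roots_unity_cnj_power_mult_power) auto
  also have "\<dots> = (if \<alpha> = \<beta> then of_nat (\<Prod>j<m. n j) else 0)"
  proof (cases "\<alpha> = \<beta>")
    case False
    then obtain j where "j < m" "\<alpha> j \<noteq> \<beta> j"
      using \<alpha> \<beta> unfolding exps_def by (metis PiE_ext lessThan_iff)
    then show ?thesis using False by (intro trans[OF prod_zero]) auto
  qed simp
  finally show ?thesis .
qed

lemma sum_design_cnj_monomial_mult_expansion:
  assumes "\<forall>\<zeta>\<in>design m n. f \<zeta> = (\<Sum>\<beta>\<in>exps m n. c \<beta> * monomial m \<beta> \<zeta>)"
    and \<alpha>: "\<alpha> \<in> exps m n"
  shows "(\<Sum>\<zeta>\<in>design m n. cnj (monomial m \<alpha> \<zeta>) * f \<zeta>) = of_nat (\<Prod>j<m. n j) * c \<alpha>"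
proof -
  have "(\<Sum>\<zeta>\<in>design m n. cnj (monomial m \<alpha> \<zeta>) * f \<zeta>)
      = (\<Sum>\<beta>\<in>exps m n. c \<beta> * (\<Sum>\<zeta>\<in>design m n. cnj (monomial m \<alpha> \<zeta>) * monomial m \<beta> \<zeta>))"
    using assms(1) by (simp add: sum_distrib_left mult_ac sum.swap[of _ "design m n"])
  also have "\<dots> = (\<Sum>\<beta>\<in>exps m n. if \<beta> = \<alpha> then of_nat (\<Prod>j<m. n j) * c \<alpha> else 0)"
    using \<alpha> by (intro sum.cong refl) (auto simp: sum_design_cnj_monomial_mult_monomial)
  finally show ?thesis using \<alpha> finite_exps by simp
qed

lemma qform_sum: "qform D (\<lambda>\<zeta> \<eta>. \<Sum>\<alpha>\<in>A. H \<alpha> \<zeta> \<eta>) Y = (\<Sum>\<alpha>\<in>A. qform D (H \<alpha>) Y)"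
  unfolding qform_def sum_distrib_left sum_distrib_right
  by (simp only: sum.swap[of _ A])

lemma qform_Re_cnj_mult:
  "qform D (\<lambda>\<zeta> \<eta>. Re (cnj (u \<zeta>) * u \<eta>)) Y = (cmod (\<Sum>\<zeta>\<in>D. cnj (u \<zeta>) * of_real (Y \<zeta>)))\<^sup>2"
proof -
  define S where "S = (\<Sum>\<zeta>\<in>D. of_real (Y \<zeta>) * u \<zeta>)"
  have "qform D (\<lambda>\<zeta> \<eta>. Re (cnj (u \<zeta>) * u \<eta>)) Y
      = Re (\<Sum>\<zeta>\<in>D. \<Sum>\<eta>\<in>D. cnj (of_real (Y \<zeta>) * u \<zeta>) * (of_real (Y \<eta>) * u \<eta>))"
    unfolding qform_def Re_sum by (intro sum.cong refl) (simp add: algebra_simps)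
  also have "\<dots> = Re (S * cnj S)"
    unfolding S_def cnj_sum sum_distrib_left sum_distrib_right by (simp only: mult.commute)
  also have "\<dots> = (cmod (cnj S))\<^sup>2"
    by (simp only: complex_norm_square[symmetric] Re_complex_of_real complex_mod_cnj)
  also have "cnj S = (\<Sum>\<zeta>\<in>D. cnj (u \<zeta>) * of_real (Y \<zeta>))"
    unfolding S_def cnj_sum by (simp add: mult.commute)
  finally show ?thesis .
qed

text \<open>Only the hypotheses \<open>n j \<ge> 2\<close> (in fact \<open>n j \<ge> 1\<close>) and the expansion of \<open>R\<close> are
  needed: for an empty fraction both sides are \<open>0\<close>, by \<open>x / 0 = 0\<close>.\<close>

theorem proposition6:
  fixes m :: nat and n :: "nat \<Rightarrow> nat"
    and F :: "(nat \<Rightarrow> complex) multiset"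
    and c :: "(nat \<Rightarrow> nat) \<Rightarrow> complex"
    and i :: nat
  assumes "m \<ge> 1"
    and "\<forall>j<m. n j \<ge> 2"
    and "set_mset F \<subseteq> design m n"
    and "F \<noteq> {#}"
    and "\<forall>\<zeta>\<in>design m n. of_nat (count F \<zeta>) = (\<Sum>\<alpha>\<in>exps m n. c \<alpha> * monomial m \<alpha> \<zeta>)"
    and "i \<in> {1..m}"
  shows "gwlp m n c i =
    1 / (\<Sum>\<zeta>\<in>design m n. real (count F \<zeta>))^2
      * qform (design m n) (Hmat m n i) (\<lambda>\<zeta>. real (count F \<zeta>))"
proof -
  define Y where "Y = (\<lambda>\<zeta>. real (count F \<zeta>))"
  define N where "N = real (\<Prod>j<m. n j)"
  define total where "total = (\<Sum>\<zeta>\<in>design m n. Y \<zeta>)"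
  have "N > 0" unfolding N_def using assms(2) by (force intro: prod_pos)
  have coeff: "(\<Sum>\<zeta>\<in>design m n. cnj (monomial m \<alpha> \<zeta>) * of_real (Y \<zeta>)) = of_real N * c \<alpha>"
    if "\<alpha> \<in> exps m n" for \<alpha>
    using sum_design_cnj_monomial_mult_expansion[OF assms(5) that] by (simp add: Y_def N_def)
  have "zero_exp m \<in> exps m n" using assms(2) by (auto simp: zero_exp_def exps_def)
  from coeff[OF this] have "of_real total = of_real N * c (zero_exp m)"
    by (simp add: total_def monomial_def zero_exp_def)
  moreover have "total \<ge> 0" unfolding total_def Y_def by (simp add: sum_nonneg)
  ultimately have "total = N * cmod (c (zero_exp m))"
    using \<open>N > 0\<close> by (metis abs_of_nonneg abs_of_pos norm_mult norm_of_real)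
  then have c0: "cmod (c (zero_exp m)) = total / N"
    using \<open>N > 0\<close> by (simp add: field_simps)
  have "gwlp m n c i = (\<Sum>\<alpha>\<in>{\<alpha>\<in>exps m n. weight0 m \<alpha> = i}. 1 / total\<^sup>2 * (N * cmod (c \<alpha>))\<^sup>2)"
    unfolding gwlp_def c0 using \<open>N > 0\<close> by (intro sum.cong refl) (simp add: field_simps)
  also have "\<dots> = (\<Sum>\<alpha>\<in>{\<alpha>\<in>exps m n. weight0 m \<alpha> = i}. 1 / total\<^sup>2 * qform (design m n) (HR m \<alpha>) Y)"
    unfolding HR_def qform_Re_cnj_mult using coeff \<open>N > 0\<close>
    by (intro sum.cong refl) (simp add: norm_mult)
  also have "\<dots> = 1 / total\<^sup>2 * qform (design m n) (Hmat m n i) Y"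
    unfolding Hmat_def qform_sum sum_distrib_left ..
  finally show ?thesis unfolding total_def Y_def .
qed

end
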